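(* Let $I$ and $J$ be disjoint subsets of $\mathbb N$, $v$ a value, $p_i\in[0,1]$ ($i\in I$), $q_j\in[0,1]$ ($j\in J$), and let $M$ be a well-formed network with $M\equiv N\mid\prod_{i\in I}m_i[\mathsf{snd}\langle v\rangle_{p_i}]^{\nu_{m_i}}\mid\prod_{j\in J}n_j[\mathsf{fwd}_{q_j}]^{\nu_{n_j}}$ such that for all $i\in I$: (1) $\{n_j: j\in J\}\subseteq\nu_{m_i}\subseteq\mathrm{nds}(M)$; (2) every node $k[P]^\mu$ of $N$ with $k\in\nu_{m_i}$ satisfies $\neg\mathrm{rcv}(P)$. Let $O=N\mid\prod_{i\in I}m_i[\mathsf{nil}]^{\nu_{m_i}}\mid\prod_{j\in J}n_j[\mathsf{resnd}\langle v\rangle_{q_j}]^{\nu_{n_j}}$ and, for any partition $I_1\cup I_2\cup I_3$ of $I$, $O_{I_1,I_2,I_3}=N\mid\prod_{i\in I_1}m_i[{!}\langle v\rangle]^{\nu_{m_i}}\mid\prod_{i\in I_2}m_i[\mathsf{nil}]^{\nu_{m_i}}\mid\prod_{i\in I_3}m_i[\mathsf{snd}\langle v\rangle_{p_i}]^{\nu_{m_i}}\mid\prod_{j\in J}n_j[\mathsf{resnd}\langle v\rangle_{q_j}]^{\nu_{n_j}}$. Then $O_{I_1,I_2,I_3}\overset{\hat\tau}{\Longrightarrow}\overline O$.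
   Context: The process calculus pTCWS. Processes $P,Q$ and probabilistic choices $C,D$ are $P ::= \mathsf{nil} \mid {!}\langle u\rangle.C \mid \lfloor ?(x).C\rfloor D \mid \tau.C \mid \sigma.C \mid X \mid \mathsf{fix}\,X.P$ and $C ::= \bigoplus_{i\in I} p_i{:}P_i$ ($I$ finite non-empty, $p_i\in(0,1]$, $\sum_i p_i=1$); in $\mathsf{fix}\,X.P$ every occurrence of $X$ is time-guarded (under a $\sigma$-prefix or in a timeout branch $D$). $1{:}P$ is written $P$; $P\oplus_pQ$ is $p{:}P\oplus(1-p){:}Q$; ${!}\langle v\rangle$ is ${!}\langle v\rangle.\mathsf{nil}$; $?(x).C$ abbreviates $\mathsf{fix}\,X.\lfloor ?(x).C\rfloor X$ ($X$ not free in $C$). Networks: $M::=\mathbf 0\mid M_1\mid M_2\mid n[P]^\nu\mid\bot$, where $n[P]^\nu$ is a node named $n$ running closed process $P$ with neighbour set $\nu$, and $\bot$ is a stuck network; $\prod$ is iterated $\mid$; $\mathrm{nds}(M)$ is the set of node names. Structural congruence $\equiv$: least equivalence preserved by $\mid$, making $\mid$ a commutative monoid with unit $\mathbf 0$, with $n[\mathsf{fix}\,X.P]^\nu\equiv n[P\{\mathsf{fix}\,X.P/X\}]^\nu$. Well-formed: no node is its own neighbour, distinct names, symmetric neighbourhood, connected neighbour graph; all networks are well-formed. $\mathrm{rcv}(P)$ holds iff $n[P]^\nu\equiv n[\lfloor ?(x).C\rfloor D]^\nu$ for some $x,C,D$. Semantics: finite-support probability distributions on networks, $\overline M$ Dirac;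 $[\![n[\bigoplus_i p_i{:}P_i]^\nu]\!]=\sum_ip_i\overline{n[P_i]^\nu}$; $(\Delta\mid\Theta)(M_1\mid M_2)=\Delta(M_1)\Theta(M_2)$. Transitions $M\xrightarrow{\lambda}\Delta$, $\lambda\in\{m!v\triangleright\nu, m?v,\tau,\sigma\}$, form the least relation closed under: (Snd) $m[{!}\langle v\rangle.C]^\nu\xrightarrow{m!v\triangleright\nu}[\![m[C]^\nu]\!]$; (Rcv) if $m\in\nu$: $n[\lfloor ?(x).C\rfloor D]^\nu\xrightarrow{m?v}[\![n[C\{v/x\}]^\nu]\!]$; $\mathbf 0\xrightarrow{m?v}\overline{\mathbf 0}$; (RcvEnb) if $\neg(m\in\nu\wedge\mathrm{rcv}(P))$ and $m\ne n$: $n[P]^\nu\xrightarrow{m?v}\overline{n[P]^\nu}$; (RcvPar) $M\xrightarrow{m?v}\Delta$, $N\xrightarrow{m?v}\Theta$ give $M\mid N\xrightarrow{m?v}\Delta\mid\Theta$; (Bcast) $M\xrightarrow{m!v\triangleright\nu}\Delta$, $N\xrightarrow{m?v}\Theta$ give $M\mid N\xrightarrow{m!v\triangleright(\nu\setminus\mathrm{nds}(N))}\Delta\mid\Theta$ (and symmetrically); (Tau) $m[\tau.C]^\nu\xrightarrow{\tau}[\![m[C]^\nu]\!]$; (TauPar) $M\xrightarrow{\tau}\Delta$ and $N$ not of the form $\bot\mid N'$ give $M\mid N\xrightarrow{\tau}\Delta\mid\overline N$ (and symmetrically); $\mathbf 0\xrightarrow{\sigma}\overline{\mathbf 0}$;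 $n[\mathsf{nil}]^\nu\xrightarrow{\sigma}\overline{n[\mathsf{nil}]^\nu}$; (Timeout) $n[\lfloor ?(x).C\rfloor D]^\nu\xrightarrow{\sigma}[\![n[D]^\nu]\!]$; (Sleep) $n[\sigma.C]^\nu\xrightarrow{\sigma}[\![n[C]^\nu]\!]$; ($\sigma$-Par) $M\xrightarrow{\sigma}\Delta$, $N\xrightarrow{\sigma}\Theta$ give $M\mid N\xrightarrow{\sigma}\Delta\mid\Theta$; (Rec) $n[P\{\mathsf{fix}\,X.P/X\}]^\nu\xrightarrow{\lambda}\Delta$ gives $n[\mathsf{fix}\,X.P]^\nu\xrightarrow{\lambda}\Delta$; (ShhSnd) $M\xrightarrow{m!v\triangleright\emptyset}\Delta$ gives $M\xrightarrow{\tau}\Delta$. $\bot$ has no transitions. Weak transitions: $M\xrightarrow{\hat\tau}\Delta$ iff $M\xrightarrow{\tau}\Delta$ or $\Delta=\overline M$; for a sub-distribution $\Delta=\sum_{i\in I}p_i\overline{M_i}$, $\Delta\xrightarrow{\hat\tau}\Theta$ iff $M_i\xrightarrow{\hat\tau}\Theta_i$ for all $i$ and $\Theta=\sum_ip_i\Theta_i$; $\overset{\hat\tau}{\Longrightarrow}$ is the reflexive-transitive closure of $\xrightarrow{\hat\tau}$ (starting from $\overline M$). Gossip processes: $\mathsf{snd}\langle u\rangle_p=\tau.({!}\langle u\rangle\oplus_p\mathsf{nil})$, $\mathsf{resnd}\langle u\rangle_p=\sigma.\mathsf{snd}\langle u\rangle_p$, $\mathsf{fwd}_p=?(x).\mathsf{resnd}\langle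 x\rangle_p$. *)

theory Defs
  imports Complex_Main
begin

datatype 'v dterm = DVal 'v | DVar nat

text \<open>A probabilistic choice C = (+)_i p_i:P_i is represented as a
list of weighted processes.  PRcv x C D is the receiver with timeout
(floor ?(x).C floor) D; PVar / PFix are process variables and recursion.\<close>
datatype 'v proc =
    PNil
  | PSnd "'v dterm" "(real \<times> 'v proc) list"
  | PRcv nat "(real \<times> 'v proc) list" "(real \<times> 'v proc) list"
  | PTau "(real \<times> 'v proc) list"
  | PSig "(real \<times> 'v proc) list"
  | PVar nat
  | PFix nat "'v proc"

type_synonym 'v choice = "(real \<times> 'v proc) list"

datatype ('n, 'v) net =
    Zero
  | Par "('n, 'v) net" "('n, 'v) net"
  | Node 'n "'v proc" "'n set"
  | Bot

text \<open>Substitution of a value for a data variable (values are closed, so no capture).\<close>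
primrec dsub :: "'v \<Rightarrow> nat \<Rightarrow> 'v proc \<Rightarrow> 'v proc" where
  "dsub v x PNil = PNil"
| "dsub v x (PSnd u C) =
     PSnd (if u = DVar x then DVal v else u) (map (map_prod id (dsub v x)) C)"
| "dsub v x (PRcv y C D) =
     PRcv y (if y = x then C else map (map_prod id (dsub v x)) C) (map (map_prod id (dsub v x)) D)"
| "dsub v x (PTau C) = PTau (map (map_prod id (dsub v x)) C)"
| "dsub v x (PSig C) = PSig (map (map_prod id (dsub v x)) C)"
| "dsub v x (PVar X) = PVar X"
| "dsub v x (PFix X P) = PFix X (dsub v x P)"

definition csub :: "'v \<Rightarrow> nat \<Rightarrow> 'v choice \<Rightarrow> 'v choice" where
  "csub v x C = map (map_prod id (dsub v x)) C"

primrec psub :: "'v proc \<Rightarrow> nat \<Rightarrow> 'v proc \<Rightarrow> 'v proc" where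
  "psub R X PNil = PNil"
| "psub R X (PSnd u C) = PSnd u (map (map_prod id (psub R X)) C)"
| "psub R X (PRcv y C D) = PRcv y (map (map_prod id (psub R X)) C) (map (map_prod id (psub R X)) D)"
| "psub R X (PTau C) = PTau (map (map_prod id (psub R X)) C)"
| "psub R X (PSig C) = PSig (map (map_prod id (psub R X)) C)"
| "psub R X (PVar Y) = (if Y = X then R else PVar Y)"
| "psub R X (PFix Y P) = (if Y = X then PFix Y P else PFix Y (psub R X P))"

definition unfold :: "nat \<Rightarrow> 'v proc \<Rightarrow> 'v proc" where
  "unfold X P = psub (PFix X P) X P"

primrec nlist :: "('n, 'v) net \<Rightarrow> 'n list" where
  "nlist Zero = []"
| "nlist (Par M N) = nlist M @ nlist N"
| "nlist (Node n P \<nu>) = [n]"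
| "nlist Bot = []"

definition nds :: "('n, 'v) net \<Rightarrow> 'n set" where
  "nds M = set (nlist M)"

primrec nodes :: "('n, 'v) net \<Rightarrow> ('n \<times> 'v proc \<times> 'n set) set" where
  "nodes Zero = {}"
| "nodes (Par M N) = nodes M \<union> nodes N"
| "nodes (Node n P \<nu>) = {(n, P, \<nu>)}"
| "nodes Bot = {}"

primrec has_bot :: "('n, 'v) net \<Rightarrow> bool" where
  "has_bot Zero = False"
| "has_bot (Par M N) = (has_bot M \<or> has_bot N)"
| "has_bot (Node n P \<nu>) = False"
| "has_bot Bot = True"

inductive cong :: "('n, 'v) net \<Rightarrow> ('n, 'v) net \<Rightarrow> bool" where
  cong_refl: "cong M M"
| cong_sym: "cong M N \<Longrightarrow> cong N M"
| cong_trans: "cong M N \<Longrightarrow> cong N K \<Longrightarrow> cong M K"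
| cong_parL: "cong M M' \<Longrightarrow> cong (Par M N) (Par M' N)"
| cong_parR: "cong N N' \<Longrightarrow> cong (Par M N) (Par M N')"
| cong_comm: "cong (Par M N) (Par N M)"
| cong_assoc: "cong (Par (Par M N) K) (Par M (Par N K))"
| cong_unit: "cong (Par M Zero) M"
| cong_fix: "cong (Node n (PFix X P) \<nu>) (Node n (unfold X P) \<nu>)"

definition rcv :: "'n \<Rightarrow> 'n set \<Rightarrow> 'v proc \<Rightarrow> bool" where
  "rcv n \<nu> P \<longleftrightarrow> (\<exists>x C D. cong (Node n P \<nu>) (Node n (PRcv x C D) \<nu>))"

definition nbr_rel :: "('n, 'v) net \<Rightarrow> ('n \<times> 'n) set" where
  "nbr_rel M = {(a, b). \<exists>P \<nu>. (a, P, \<nu>) \<in> nodes M \<and> b \<in> \<nu> \<and> b \<in> nds M}"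

definition well_formed :: "('n, 'v) net \<Rightarrow> bool" where
  "well_formed M \<longleftrightarrow>
     (\<forall>(n, P, \<nu>) \<in> nodes M. n \<notin> \<nu>)
   \<and> distinct (nlist M)
   \<and> (\<forall>(a, P, \<nu>) \<in> nodes M. \<forall>(b, Q, \<mu>) \<in> nodes M. b \<in> \<nu> \<longleftrightarrow> a \<in> \<mu>)
   \<and> (\<forall>a \<in> nds M. \<forall>b \<in> nds M. (a, b) \<in> (nbr_rel M)\<^sup>*)"

type_synonym ('n, 'v) dist = "('n, 'v) net \<Rightarrow> real"

definition dirac :: "('n, 'v) net \<Rightarrow> ('n, 'v) dist" where
  "dirac M = (\<lambda>N. if N = M then 1 else 0)"

definition lift :: "'n \<Rightarrow> 'v choice \<Rightarrow> 'n set \<Rightarrow> ('n, 'v) dist" where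
  "lift n C \<nu> = (\<lambda>N. sum_list (map (\<lambda>(p, P). if N = Node n P \<nu> then p else 0) C))"

definition dpar :: "('n, 'v) dist \<Rightarrow> ('n, 'v) dist \<Rightarrow> ('n, 'v) dist" where
  "dpar D E = (\<lambda>K. case K of Par A B \<Rightarrow> D A * E B | _ \<Rightarrow> 0)"

datatype ('n, 'v) lab = Out 'n 'v "'n set" | In 'n 'v | Tau | Sig

inductive trans :: "('n, 'v) net \<Rightarrow> ('n, 'v) lab \<Rightarrow> ('n, 'v) dist \<Rightarrow> bool" where
  Snd: "trans (Node m (PSnd (DVal v) C) \<nu>) (Out m v \<nu>) (lift m C \<nu>)"
| Rcv: "m \<in> \<nu> \<Longrightarrow> trans (Node n (PRcv x C D) \<nu>) (In m v) (lift n (csub v x C) \<nu>)"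
| RcvZero: "trans Zero (In m v) (dirac Zero)"
| RcvEnb: "\<not> (m \<in> \<nu> \<and> rcv n \<nu> P) \<Longrightarrow> m \<noteq> n \<Longrightarrow> trans (Node n P \<nu>) (In m v) (dirac (Node n P \<nu>))"
| RcvPar: "trans M (In m v) D \<Longrightarrow> trans N (In m v) E \<Longrightarrow> trans (Par M N) (In m v) (dpar D E)"
| BcastL: "trans M (Out m v \<nu>) D \<Longrightarrow> trans N (In m v) E \<Longrightarrow>
           trans (Par M N) (Out m v (\<nu> - nds N)) (dpar D E)"
| BcastR: "trans M (Out m v \<nu>) D \<Longrightarrow> trans N (In m v) E \<Longrightarrow>
           trans (Par N M) (Out m v (\<nu> - nds N)) (dpar E D)"
| TauNode: "trans (Node m (PTau C) \<nu>) Tau (lift m C \<nu>)"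
| TauParL: "trans M Tau D \<Longrightarrow> \<not> (\<exists>N'. cong N (Par Bot N')) \<Longrightarrow>
            trans (Par M N) Tau (dpar D (dirac N))"
| TauParR: "trans M Tau D \<Longrightarrow> \<not> (\<exists>N'. cong N (Par Bot N')) \<Longrightarrow>
            trans (Par N M) Tau (dpar (dirac N) D)"
| SigZero: "trans Zero Sig (dirac Zero)"
| SigNil: "trans (Node n PNil \<nu>) Sig (dirac (Node n PNil \<nu>))"
| Timeout: "trans (Node n (PRcv x C D) \<nu>) Sig (lift n D \<nu>)"
| Sleep: "trans (Node n (PSig C) \<nu>) Sig (lift n C \<nu>)"
| SigPar: "trans M Sig D \<Longrightarrow> trans N Sig E \<Longrightarrow> trans (Par M N) Sig (dpar D E)"
| Rec: "trans (Node n (unfold X P) \<nu>) l D \<Longrightarrow> trans (Node n (PFix X P) \<nu>) l D"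
| ShhSnd: "trans M (Out m v {}) D \<Longrightarrow> trans M Tau D"

definition hat_tau :: "('n, 'v) net \<Rightarrow> ('n, 'v) dist \<Rightarrow> bool" where
  "hat_tau M D \<longleftrightarrow> trans M Tau D \<or> D = dirac M"

text \<open>Lifting to (sub-)distributions D = sum_i p_i Dirac(M_i): a finite
decomposition (list) with nonnegative weights.\<close>
definition dist_hat_tau :: "('n, 'v) dist \<Rightarrow> ('n, 'v) dist \<Rightarrow> bool" where
  "dist_hat_tau D E \<longleftrightarrow>
     (\<exists>xs :: (real \<times> ('n, 'v) net \<times> ('n, 'v) dist) list.
        D = (\<lambda>N. sum_list (map (\<lambda>(p, M, _). if M = N then p else 0) xs))
      \<and> (\<forall>(p, M, F) \<in> set xs. 0 \<le> p \<and> hat_tau M F)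
      \<and> E = (\<lambda>N. sum_list (map (\<lambda>(p, _, F). p * F N) xs)))"

definition weak_tau :: "('n, 'v) net \<Rightarrow> ('n, 'v) dist \<Rightarrow> bool" where
  "weak_tau M E \<longleftrightarrow> dist_hat_tau\<^sup>*\<^sup>* (dirac M) E"

text \<open>A distribution equals Dirac(M) up to structural congruence: it is a
finitely supported probability distribution all of whose support is
structurally congruent to M.\<close>
definition dirac_cong :: "('n, 'v) dist \<Rightarrow> ('n, 'v) net \<Rightarrow> bool" where
  "dirac_cong E M \<longleftrightarrow>
     finite {N. E N \<noteq> 0} \<and> (\<forall>N. 0 \<le> E N) \<and> (\<forall>N. E N \<noteq> 0 \<longrightarrow> cong N M)
   \<and> sum E {N. E N \<noteq> 0} = 1"

definition snd_p :: "'v dterm \<Rightarrow> real \<Rightarrow> 'v proc" where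
  "snd_p u p = PTau [(p, PSnd u [(1, PNil)]), (1 - p, PNil)]"

definition resnd_p :: "'v dterm \<Rightarrow> real \<Rightarrow> 'v proc" where
  "resnd_p u p = PSig [(1, snd_p u p)]"

text \<open>fwd_p = ?(x).resnd<x>_p = fix X. (floor ?(x).resnd<x>_p floor) X, with x = X = 0.\<close>
definition fwd_p :: "real \<Rightarrow> 'v proc" where
  "fwd_p p = PFix 0 (PRcv 0 [(1, resnd_p (DVar 0) p)] [(1, PVar 0)])"

definition bang :: "'v \<Rightarrow> 'v proc" where
  "bang v = PSnd (DVal v) [(1, PNil)]"

definition prodnet :: "nat set \<Rightarrow> (nat \<Rightarrow> ('n, 'v) net) \<Rightarrow> ('n, 'v) net" where
  "prodnet I f = foldr (\<lambda>i acc. Par (f i) acc) (sorted_list_of_set I) Zero"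

end

theory Submission
  imports Defs "HOL-Library.Multiset"
begin

text \<open>
  Every sender m_i with i in I1 or I3 can be silenced on its own. A node running !<v>
  broadcasts to its neighbours; all of them lie in the network and none of them is a receiver:
  the forwarders already sleep in resnd<v>, the other gossip nodes send or are idle, and the
  nodes of N are not receivers by hypothesis. So the broadcast is heard by nobody and becomes
  a \<tau>-step to m_i[nil]. A node running snd<v>_p makes a \<tau>-step to a p / (1 - p) mixture
  of !<v> and nil, and both branches reach m_i[nil]. Induction over the finite set of senders
  gives the weak transition. Well-formedness and the absence of receivers are read off the
  skeleton of names, neighbourhoods and top prefixes, which structural congruence preserves.
\<close>

(* The outermost action of a process, seen through recursion. It is invariant under unfolding
   and hence under structural congruence, which is how rcv is refuted for concrete processes. *)
datatype prefix = PrefNil | PrefSnd | PrefRcv | PrefTau | PrefSig | PrefVar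

primrec top_prefix :: "'v proc \<Rightarrow> prefix" where
  "top_prefix PNil = PrefNil"
| "top_prefix (PSnd u C) = PrefSnd"
| "top_prefix (PRcv x C D) = PrefRcv"
| "top_prefix (PTau C) = PrefTau"
| "top_prefix (PSig C) = PrefSig"
| "top_prefix (PVar X) = PrefVar"
| "top_prefix (PFix X P) = top_prefix P"

lemma top_prefix_psub:
  "top_prefix Q \<noteq> PrefVar \<Longrightarrow> top_prefix (psub R X Q) = top_prefix Q"
  by (induction Q) auto

lemma top_prefix_psub_var:
  "top_prefix Q = PrefVar \<Longrightarrow> top_prefix (psub R X Q) \<in> {PrefVar, top_prefix R}"
  by (induction Q) auto

lemma top_prefix_unfold [simp]: "top_prefix (unfold X P) = top_prefix P"
  using top_prefix_psub[of P "PFix X P" X] top_prefix_psub_var[of P "PFix X P" X]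
  by (cases "top_prefix P = PrefVar") (auto simp: unfold_def)

definition nbhds :: "('n, 'v) net \<Rightarrow> ('n \<times> 'n set) set" where
  "nbhds M = (\<lambda>(k, P, \<mu>). (k, \<mu>)) ` nodes M"

definition prefixes :: "('n, 'v) net \<Rightarrow> ('n \<times> prefix \<times> 'n set) set" where
  "prefixes M = (\<lambda>(k, P, \<mu>). (k, top_prefix P, \<mu>)) ` nodes M"

lemma cong_prefixes: "cong M M' \<Longrightarrow> prefixes M = prefixes M'"
  by (induction rule: cong.induct) (auto simp: prefixes_def image_Un)

lemma cong_nbhds: "cong M M' \<Longrightarrow> nbhds M = nbhds M'"
  by (induction rule: cong.induct) (auto simp: nbhds_def image_Un unfold_def)

lemma cong_mset_nlist: "cong M M' \<Longrightarrow> mset (nlist M) = mset (nlist M')"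
  by (induction rule: cong.induct) auto

lemma cong_has_bot: "cong M M' \<Longrightarrow> has_bot M = has_bot M'"
  by (induction rule: cong.induct) auto

lemma not_rcv: "top_prefix P \<noteq> PrefRcv \<Longrightarrow> \<not> rcv k \<mu> P"
  by (auto simp: rcv_def prefixes_def dest: cong_prefixes)

lemma nbr_rel_nbhds:
  "nbr_rel M = {(a, b). \<exists>\<nu>. (a, \<nu>) \<in> nbhds M \<and> b \<in> \<nu> \<and> b \<in> nds M}"
  unfolding nbr_rel_def nbhds_def by (auto simp: image_def split_def; force)

lemma well_formed_nbhds_iff:
  "well_formed M \<longleftrightarrow>
     (\<forall>(a, \<nu>) \<in> nbhds M. a \<notin> \<nu>)
   \<and> distinct (nlist M)
   \<and> (\<forall>(a, \<nu>) \<in> nbhds M. \<forall>(b, \<mu>) \<in> nbhds M. b \<in> \<nu> \<longleftrightarrow> a \<in> \<mu>)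
   \<and> (\<forall>a \<in> nds M. \<forall>b \<in> nds M. (a, b) \<in> (nbr_rel M)\<^sup>*)"
  unfolding well_formed_def nbhds_def by fastforce

lemma well_formed_transfer:
  assumes "well_formed M" "nbhds M = nbhds M'" "mset (nlist M) = mset (nlist M')"
  shows "well_formed M'"
proof -
  have "nds M = nds M'" "distinct (nlist M) = distinct (nlist M')"
    using assms(3) by (auto simp: nds_def dest: mset_eq_setD mset_eq_imp_distinct_iff)
  then show ?thesis
    using assms(1,2) by (simp add: well_formed_nbhds_iff nbr_rel_nbhds)
qed

lemma well_formed_cong: "well_formed M \<Longrightarrow> cong M M' \<Longrightarrow> well_formed M'"
  by (metis well_formed_transfer cong_nbhds cong_mset_nlist)

primrec override :: "('n, 'v) net \<Rightarrow> ('n \<rightharpoonup> 'v proc) \<Rightarrow> ('n, 'v) net" where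
  "override Zero F = Zero"
| "override (Par A B) F = Par (override A F) (override B F)"
| "override (Node k P \<mu>) F = Node k (case F k of None \<Rightarrow> P | Some Q \<Rightarrow> Q) \<mu>"
| "override Bot F = Bot"

lemma nlist_override [simp]: "nlist (override K F) = nlist K"
  by (induction K) auto

lemma nds_override [simp]: "nds (override K F) = nds K"
  by (simp add: nds_def)

lemma has_bot_override [simp]: "has_bot (override K F) = has_bot K"
  by (induction K) auto

lemma nodes_override:
  "nodes (override K F) = (\<lambda>(k, P, \<mu>). (k, case F k of None \<Rightarrow> P | Some Q \<Rightarrow> Q, \<mu>)) ` nodes K"
  by (induction K) (auto simp: image_Un)

lemma nbhds_override [simp]: "nbhds (override K F) = nbhds K"
  by (force simp: nbhds_def nodes_override image_image split_def)

lemma well_formed_override [simp]: "well_formed (override K F) = well_formed K"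
  by (metis well_formed_transfer nbhds_override nlist_override)

lemma override_override: "override (override K F) G = override K (F ++ G)"
  by (induction K) (auto simp: map_add_def split: option.splits)

lemma override_id: "\<forall>k \<in> nds K. F k = None \<Longrightarrow> override K F = K"
  by (induction K) (auto simp: nds_def)

lemma nds_if_nodes: "(k, P, \<mu>) \<in> nodes K \<Longrightarrow> k \<in> nds K"
  by (induction K) (auto simp: nds_def)

lemma nds_Par [simp]: "nds (Par A B) = nds A \<union> nds B"
  by (simp add: nds_def)

lemma nds_Node [simp]: "nds (Node k P \<mu>) = {k}"
  by (simp add: nds_def)

definition lift_at :: "('n, 'v) net \<Rightarrow> 'n \<Rightarrow> 'v choice \<Rightarrow> ('n, 'v) dist" where
  "lift_at K k C = (\<lambda>N. \<Sum>(p, P)\<leftarrow>C. if N = override K [k \<mapsto> P] then p else 0)"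

lemma lift_at_Node: "lift_at (Node k P \<nu>) k C = lift k C \<nu>"
  by (simp add: lift_at_def lift_def)

lemma lift_at_single: "lift_at K k [(1, P)] = dirac (override K [k \<mapsto> P])"
  by (auto simp: lift_at_def dirac_def)

lemma lift_at_Par_left:
  assumes "k \<notin> nds B"
  shows "dpar (lift_at A k C) (dirac B) = lift_at (Par A B) k C"
proof -
  have "override B [k \<mapsto> P] = B" for P
    using assms by (intro override_id) auto
  then show ?thesis
    unfolding lift_at_def
    by (induction C) (auto simp: dpar_def dirac_def fun_eq_iff split: net.splits)
qed

lemma lift_at_Par_right:
  assumes "k \<notin> nds A"
  shows "dpar (dirac A) (lift_at B k C) = lift_at (Par A B) k C"
proof -
  have "override A [k \<mapsto> P] = A" for P
    using assms by (intro override_id) auto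
  then show ?thesis
    unfolding lift_at_def
    by (induction C) (auto simp: dpar_def dirac_def fun_eq_iff split: net.splits)
qed

lemma dpar_dirac: "dpar (dirac A) (dirac B) = dirac (Par A B)"
  by (auto simp: dpar_def dirac_def fun_eq_iff split: net.splits)

lemma not_cong_Par_Bot: "\<not> has_bot B \<Longrightarrow> \<not> (\<exists>N. cong B (Par Bot N))"
  using cong_has_bot by fastforce

lemma nds_disjoint_if_distinct:
  "distinct (nlist (Par A B)) \<Longrightarrow> (k, P, \<mu>) \<in> nodes A \<Longrightarrow> k \<notin> nds B"
  "distinct (nlist (Par A B)) \<Longrightarrow> (k, P, \<mu>) \<in> nodes B \<Longrightarrow> k \<notin> nds A"
  by (auto simp: nds_def dest!: nds_if_nodes)

definition unheard :: "('n, 'v) net \<Rightarrow> 'n \<Rightarrow> bool" where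
  "unheard K k \<longleftrightarrow> (\<forall>(k', Q, \<mu>) \<in> nodes K. k' \<noteq> k \<longrightarrow> k \<in> \<mu> \<longrightarrow> \<not> rcv k' \<mu> Q)"

lemma unheard_Par [simp]: "unheard (Par A B) k \<longleftrightarrow> unheard A k \<and> unheard B k"
  by (auto simp: unheard_def)

lemma trans_In_dirac:
  assumes "k \<notin> nds K" "unheard K k" "\<not> has_bot K"
  shows "trans K (In k v) (dirac K)"
  using assms
proof (induction K)
  case (Par A B)
  then show ?case
    using trans.RcvPar[of A k v "dirac A" B "dirac B"] by (simp add: dpar_dirac)
qed (auto simp: unheard_def intro: trans.RcvZero trans.RcvEnb)

lemma trans_Tau_lift_at:
  assumes "(k, PTau C, \<nu>) \<in> nodes K" "distinct (nlist K)" "\<not> has_bot K"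
  shows "trans K Tau (lift_at K k C)"
  using assms
proof (induction K)
  case (Par A B)
  show ?case
  proof (cases "(k, PTau C, \<nu>) \<in> nodes A")
    case True
    then have kB: "k \<notin> nds B"
      using Par.prems(2) by (intro nds_disjoint_if_distinct)
    have "trans A Tau (lift_at A k C)"
      using Par True by (intro Par.IH(1)) auto
    then have "trans (Par A B) Tau (dpar (lift_at A k C) (dirac B))"
      using Par.prems by (intro trans.TauParL not_cong_Par_Bot) auto
    then show ?thesis
      using kB by (simp add: lift_at_Par_left)
  next
    case False
    then have inB: "(k, PTau C, \<nu>) \<in> nodes B"
      using Par.prems by simp
    then have kA: "k \<notin> nds A"
      using Par.prems(2) by (intro nds_disjoint_if_distinct)
    have "trans B Tau (lift_at B k C)"
      using Par inB by (intro Par.IH(2)) auto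
    then have "trans (Par A B) Tau (dpar (dirac A) (lift_at B k C))"
      using Par.prems by (intro trans.TauParR not_cong_Par_Bot) auto
    then show ?thesis
      using kA by (simp add: lift_at_Par_right)
  qed
qed (auto simp: lift_at_Node intro: trans.TauNode)

lemma trans_Out_lift_at:
  assumes "(k, PSnd (DVal v) C, \<nu>) \<in> nodes K" "distinct (nlist K)" "\<not> has_bot K" "unheard K k"
  shows "trans K (Out k v (\<nu> - (nds K - {k}))) (lift_at K k C)"
  using assms
proof (induction K)
  case (Par A B)
  show ?case
  proof (cases "(k, PSnd (DVal v) C, \<nu>) \<in> nodes A")
    case True
    then have kB: "k \<notin> nds B"
      using Par.prems(2) by (intro nds_disjoint_if_distinct)
    have "trans A (Out k v (\<nu> - (nds A - {k}))) (lift_at A k C)"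
      using Par True by (intro Par.IH(1)) auto
    from trans.BcastL[OF this trans_In_dirac[of k B]]
    have "trans (Par A B) (Out k v (\<nu> - (nds A - {k}) - nds B)) (lift_at (Par A B) k C)"
      using Par.prems kB by (simp add: lift_at_Par_left)
    moreover have "\<nu> - (nds A - {k}) - nds B = \<nu> - (nds (Par A B) - {k})"
      using kB by auto
    ultimately show ?thesis
      by simp
  next
    case False
    then have inB: "(k, PSnd (DVal v) C, \<nu>) \<in> nodes B"
      using Par.prems by simp
    then have kA: "k \<notin> nds A"
      using Par.prems(2) by (intro nds_disjoint_if_distinct)
    have "trans B (Out k v (\<nu> - (nds B - {k}))) (lift_at B k C)"
      using Par inB by (intro Par.IH(2)) auto
    from trans.BcastR[OF this trans_In_dirac[of k A]]
    have "trans (Par A B) (Out k v (\<nu> - (nds B - {k}) - nds A)) (lift_at (Par A B) k C)"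
      using Par.prems kA by (simp add: lift_at_Par_right)
    moreover have "\<nu> - (nds B - {k}) - nds A = \<nu> - (nds (Par A B) - {k})"
      using kA by auto
    ultimately show ?thesis
      by simp
  qed
qed (auto simp: lift_at_Node intro: trans.Snd)

lemma override_in_nodes:
  "(k, P, \<mu>) \<in> nodes K \<Longrightarrow> (k, case F k of None \<Rightarrow> P | Some Q \<Rightarrow> Q, \<mu>) \<in> nodes (override K F)"
  by (force simp: nodes_override)

lemma unheard_override:
  assumes "unheard K k" "\<forall>k' Q. F k' = Some Q \<longrightarrow> k' = k \<or> top_prefix Q \<noteq> PrefRcv"
  shows "unheard (override K F) k"
  using assms by (fastforce simp: unheard_def nodes_override not_rcv split: option.splits)

lemma dist_hat_tau_dirac: "hat_tau M E \<Longrightarrow> dist_hat_tau (dirac M) E"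
  unfolding dist_hat_tau_def
  by (rule exI[of _ "[(1, M, E)]"]) (auto simp: dirac_def fun_eq_iff)

lemma dist_hat_tau_choice:
  assumes "\<forall>(p, P) \<in> set C. 0 \<le> p \<and> hat_tau (f P) E" "(\<Sum>(p, P)\<leftarrow>C. p) = 1"
  shows "dist_hat_tau (\<lambda>N. \<Sum>(p, P)\<leftarrow>C. if N = f P then p else 0) E"
  unfolding dist_hat_tau_def
proof (intro exI conjI)
  let ?xs = "map (\<lambda>(p, P). (p, f P, E)) C"
  show "(\<lambda>N. \<Sum>(p, P)\<leftarrow>C. if N = f P then p else 0) = (\<lambda>N. \<Sum>(p, M, _)\<leftarrow>?xs. if M = N then p else 0)"
    by (induction C) (auto simp: fun_eq_iff)
  show "\<forall>(p, M, F) \<in> set ?xs. 0 \<le> p \<and> hat_tau M F"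
    using assms(1) by auto
  have "(\<Sum>(p, P)\<leftarrow>C. p * E N) = (\<Sum>(p, P)\<leftarrow>C. p) * E N" for N
    by (induction C) (auto simp: algebra_simps)
  then show "E = (\<lambda>N. \<Sum>(p, _, F)\<leftarrow>?xs. p * F N)"
    using assms(2) by (simp add: comp_def split_def)
qed

lemma weak_tau_refl: "weak_tau M (dirac M)"
  by (simp add: weak_tau_def)

lemma weak_tau_hat_tau: "hat_tau M E \<Longrightarrow> weak_tau M E"
  unfolding weak_tau_def by (simp add: dist_hat_tau_dirac r_into_rtranclp)

lemma weak_tau_trans: "weak_tau M (dirac M') \<Longrightarrow> weak_tau M' E \<Longrightarrow> weak_tau M E"
  unfolding weak_tau_def by (rule rtranclp_trans)

lemma trans_Tau_silence_bang:
  assumes "well_formed K" "\<not> has_bot K" "(k, bang v, \<nu>) \<in> nodes K" "\<nu> \<subseteq> nds K" "unheard K k"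
  shows "trans K Tau (dirac (override K [k \<mapsto> PNil]))"
proof -
  have "trans K (Out k v (\<nu> - (nds K - {k}))) (lift_at K k [(1, PNil)])"
    using assms by (intro trans_Out_lift_at) (auto simp: bang_def well_formed_def)
  moreover have "k \<notin> \<nu>"
    using assms(1,3) by (auto simp: well_formed_def)
  then have "\<nu> - (nds K - {k}) = {}"
    using assms(4) by auto
  ultimately have "trans K Tau (lift_at K k [(1, PNil)])"
    by (metis trans.ShhSnd)
  then show ?thesis
    by (simp add: lift_at_single)
qed

lemma weak_tau_silence_snd:
  assumes "well_formed K" "\<not> has_bot K" "(k, snd_p (DVal v) p, \<nu>) \<in> nodes K" "\<nu> \<subseteq> nds K"
    "unheard K k" "0 \<le> p" "p \<le> 1"
  shows "weak_tau K (dirac (override K [k \<mapsto> PNil]))"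
proof -
  let ?C = "[(p, bang v), (1 - p, PNil)]"
  have "trans K Tau (lift_at K k ?C)"
    using assms(1-3) by (intro trans_Tau_lift_at) (auto simp: snd_p_def bang_def well_formed_def)
  then have tau: "dist_hat_tau (dirac K) (lift_at K k ?C)"
    by (simp add: dist_hat_tau_dirac hat_tau_def)
  have "trans (override K [k \<mapsto> bang v]) Tau (dirac (override (override K [k \<mapsto> bang v]) [k \<mapsto> PNil]))"
    using assms(1-5) override_in_nodes[OF assms(3), of "[k \<mapsto> bang v]"]
    by (intro trans_Tau_silence_bang unheard_override) auto
  then have "hat_tau (override K [k \<mapsto> bang v]) (dirac (override K [k \<mapsto> PNil]))"
    by (simp add: hat_tau_def override_override)
  then have "dist_hat_tau (lift_at K k ?C) (dirac (override K [k \<mapsto> PNil]))"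
    unfolding lift_at_def using assms(6,7) by (intro dist_hat_tau_choice) (auto simp: hat_tau_def)
  with tau show ?thesis
    unfolding weak_tau_def by (meson r_into_rtranclp rtranclp.rtrancl_into_rtrancl)
qed

definition nil_on :: "'n set \<Rightarrow> ('n \<rightharpoonup> 'v proc)" where
  "nil_on S = (\<lambda>k. if k \<in> S then Some PNil else None)"

lemma case_nil_on [simp]:
  "(case nil_on S k of None \<Rightarrow> P | Some Q \<Rightarrow> Q) = (if k \<in> S then PNil else P)"
  by (simp add: nil_on_def)

lemma weak_tau_silence_senders:
  fixes K :: "('n, 'v) net"
  assumes "well_formed K" "\<not> has_bot K" "finite S"
    and "\<forall>k \<in> S. \<exists>\<nu>. \<nu> \<subseteq> nds K \<and> ((k, bang v, \<nu>) \<in> nodes K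
           \<or> (\<exists>p. 0 \<le> p \<and> p \<le> 1 \<and> (k, snd_p (DVal v) p, \<nu>) \<in> nodes K))"
    and "\<forall>k \<in> S. unheard K k"
  shows "weak_tau K (dirac (override K (nil_on S)))"
  using assms(3-5)
proof (induction S rule: finite_induct)
  case empty
  then show ?case
    by (simp add: nil_on_def override_id weak_tau_refl)
next
  case (insert k S)
  let ?K = "override K (nil_on S)"
  have K: "well_formed ?K" "\<not> has_bot ?K"
    using assms(1,2) by simp_all
  have "unheard ?K k"
    by (rule unheard_override) (use insert.prems(2) in \<open>simp_all add: nil_on_def\<close>)
  have "nil_on S k = (None :: 'v proc option)"
    using insert.hyps(2) by (simp add: nil_on_def)
  then have in_K: "(k, P, \<nu>) \<in> nodes ?K" if "(k, P, \<nu>) \<in> nodes K" for P \<nu>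
    using override_in_nodes[OF that, of "nil_on S"] by simp
  obtain \<nu> where \<nu>: "\<nu> \<subseteq> nds ?K" and
    "(k, bang v, \<nu>) \<in> nodes K \<or> (\<exists>p. 0 \<le> p \<and> p \<le> 1 \<and> (k, snd_p (DVal v) p, \<nu>) \<in> nodes K)"
    using insert.prems(1) by auto
  then have "weak_tau ?K (dirac (override ?K [k \<mapsto> PNil]))"
  proof (elim disjE exE conjE)
    assume "(k, bang v, \<nu>) \<in> nodes K"
    then have "trans ?K Tau (dirac (override ?K [k \<mapsto> PNil]))"
      using K \<nu> \<open>unheard ?K k\<close> in_K by (intro trans_Tau_silence_bang)
    then show ?thesis
      by (intro weak_tau_hat_tau) (simp add: hat_tau_def)
  next
    fix p
    assume "0 \<le> p" "p \<le> 1" "(k, snd_p (DVal v) p, \<nu>) \<in> nodes K"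
    then show ?thesis
      using K \<nu> \<open>unheard ?K k\<close> in_K by (intro weak_tau_silence_snd)
  qed
  moreover have "nil_on S ++ [k \<mapsto> PNil] = (nil_on (insert k S) :: 'n \<rightharpoonup> 'v proc)"
    by (simp add: nil_on_def map_add_def fun_eq_iff)
  ultimately have "weak_tau ?K (dirac (override K (nil_on (insert k S))))"
    by (simp add: override_override)
  moreover have "weak_tau K (dirac ?K)"
    using insert.IH insert.prems by simp
  ultimately show ?case
    by (rule weak_tau_trans[rotated])
qed

definition par_list :: "('n, 'v) net list \<Rightarrow> ('n, 'v) net" where
  "par_list Ms = foldr Par Ms Zero"

lemma prodnet_par_list: "prodnet A f = par_list (map f (sorted_list_of_set A))"
proof -
  have "foldr (\<lambda>i acc. Par (f i) acc) xs Zero = foldr Par (map f xs) Zero" for xs :: "nat list"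
    by (induction xs) auto
  then show ?thesis
    by (simp add: prodnet_def par_list_def)
qed

lemma par_list_Nil [simp]: "par_list [] = Zero"
  and par_list_Cons [simp]: "par_list (M # Ms) = Par M (par_list Ms)"
  by (simp_all add: par_list_def)

lemma par_list_simps [simp]:
  "nlist (par_list Ms) = concat (map nlist Ms)"
  "nodes (par_list Ms) = \<Union> (nodes ` set Ms)"
  "has_bot (par_list Ms) = (\<exists>M \<in> set Ms. has_bot M)"
  "override (par_list Ms) F = par_list (map (\<lambda>M. override M F) Ms)"
  by (induction Ms) auto

declare cong_trans [trans]

lemma cong_Par_left_commute: "cong (Par A (Par B C)) (Par B (Par A C))"
proof -
  have "cong (Par A (Par B C)) (Par (Par A B) C)"
    by (rule cong_sym, rule cong_assoc)
  also have "cong \<dots> (Par (Par B A) C)"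
    by (rule cong_parL, rule cong_comm)
  also have "cong \<dots> (Par B (Par A C))"
    by (rule cong_assoc)
  finally show ?thesis .
qed

lemma cong_par_list_append: "cong (par_list (Ms @ Ns)) (Par (par_list Ms) (par_list Ns))"
proof (induction Ms)
  case Nil
  have "cong (par_list Ns) (Par (par_list Ns) Zero)"
    by (rule cong_sym, rule cong_unit)
  also have "cong \<dots> (Par Zero (par_list Ns))"
    by (rule cong_comm)
  finally show ?case
    by simp
next
  case (Cons M Ms)
  have "cong (Par M (par_list (Ms @ Ns))) (Par M (Par (par_list Ms) (par_list Ns)))"
    using Cons by (rule cong_parR)
  also have "cong \<dots> (Par (Par M (par_list Ms)) (par_list Ns))"
    by (rule cong_sym, rule cong_assoc)
  finally show ?case
    by simp
qed

lemma cong_par_list_perm: "mset Ms = mset Ns \<Longrightarrow> cong (par_list Ms) (par_list Ns)"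
proof (induction Ms arbitrary: Ns)
  case Nil
  then show ?case
    by (simp add: cong_refl)
next
  case (Cons M Ms)
  then obtain Ns1 Ns2 where Ns: "Ns = Ns1 @ M # Ns2"
    by (metis list.set_intros(1) set_mset_mset split_list)
  have "cong (Par M (par_list Ms)) (Par M (par_list (Ns1 @ Ns2)))"
    using Cons Ns by (intro cong_parR Cons.IH) simp
  also have "cong \<dots> (Par M (Par (par_list Ns1) (par_list Ns2)))"
    by (rule cong_parR, rule cong_par_list_append)
  also have "cong \<dots> (Par (par_list Ns1) (Par M (par_list Ns2)))"
    by (rule cong_Par_left_commute)
  also have "cong \<dots> (par_list Ns)"
    unfolding Ns using cong_par_list_append[of Ns1 "M # Ns2"] by (simp add: cong_sym)
  finally show ?case
    by simp
qed

lemma mset_sorted_list_of_set: "mset (sorted_list_of_set A) = mset_set A"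
  by (metis mset_sorted_list_of_multiset sorted_list_of_mset_set)

lemma cong_prodnet_union:
  assumes "finite A" "finite B" "A \<inter> B = {}"
  shows "cong (Par (prodnet A f) (Par (prodnet B f) R)) (Par (prodnet (A \<union> B) f) R)"
proof -
  let ?xs = "map f (sorted_list_of_set A)" and ?ys = "map f (sorted_list_of_set B)"
  have "mset (?xs @ ?ys) = mset (map f (sorted_list_of_set (A \<union> B)))"
    using assms by (simp add: mset_sorted_list_of_set mset_set_Union)
  then have "cong (Par (prodnet A f) (prodnet B f)) (prodnet (A \<union> B) f)"
    unfolding prodnet_par_list
    by (meson cong_par_list_append cong_par_list_perm cong_sym cong_trans)
  then have "cong (Par (Par (prodnet A f) (prodnet B f)) R) (Par (prodnet (A \<union> B) f) R)"
    by (rule cong_parL)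
  then show ?thesis
    by (meson cong_assoc cong_sym cong_trans)
qed

lemma cong_prodnet_union3:
  assumes "finite A" "finite B" "finite C" "A \<inter> B = {}" "A \<inter> C = {}" "B \<inter> C = {}"
  shows "cong (Par (prodnet A f) (Par (prodnet B f) (Par (prodnet C f) R))) (Par (prodnet (A \<union> B \<union> C) f) R)"
proof -
  have "cong (Par (prodnet A f) (Par (prodnet B f) (Par (prodnet C f) R)))
             (Par (prodnet A f) (Par (prodnet (B \<union> C) f) R))"
    using assms by (intro cong_parR cong_prodnet_union)
  also have "cong \<dots> (Par (prodnet (A \<union> (B \<union> C)) f) R)"
    using assms by (intro cong_prodnet_union) auto
  finally show ?thesis
    by (simp add: Un_assoc)
qed

lemma nbhds_Par [simp]: "nbhds (Par A B) = nbhds A \<union> nbhds B"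
  by (simp add: nbhds_def image_Un)

lemma prodnet_Node_simps [simp]:
  "finite A \<Longrightarrow> nbhds (prodnet A (\<lambda>i. Node (m i) (P i) (\<mu> i))) = (\<lambda>i. (m i, \<mu> i)) ` A"
  "finite A \<Longrightarrow> nodes (prodnet A (\<lambda>i. Node (m i) (P i) (\<mu> i))) = (\<lambda>i. (m i, P i, \<mu> i)) ` A"
  "nlist (prodnet A (\<lambda>i. Node (m i) (P i) (\<mu> i))) = map m (sorted_list_of_set A)"
  "has_bot (prodnet A (\<lambda>i. Node (m i) (P i) (\<mu> i))) = False"
  "override (prodnet A (\<lambda>i. Node (m i) (P i) (\<mu> i))) F
     = prodnet A (\<lambda>i. Node (m i) (case F (m i) of None \<Rightarrow> P i | Some Q \<Rightarrow> Q) (\<mu> i))"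
  by (auto simp: prodnet_par_list comp_def nbhds_def image_UN)

lemma prodnet_cong: "(\<And>i. i \<in> A \<Longrightarrow> f i = g i) \<Longrightarrow> prodnet A f = prodnet A g"
  unfolding prodnet_par_list
  by (intro arg_cong[where f = par_list]) (cases "finite A"; simp add: map_eq_conv)

lemma unheard_if_neighbours_quiet:
  assumes "well_formed K" "(k, P, \<nu>) \<in> nodes K" "\<forall>(k', Q, \<mu>) \<in> nodes K. k' \<in> \<nu> \<longrightarrow> \<not> rcv k' \<mu> Q"
  shows "unheard K k"
  unfolding unheard_def
proof (intro ballI, clarify)
  fix k' Q \<mu>
  assume k': "(k', Q, \<mu>) \<in> nodes K" "k \<in> \<mu>" "rcv k' \<mu> Q"
  have "\<forall>(a, P, \<nu>) \<in> nodes K. \<forall>(b, Q, \<mu>) \<in> nodes K. b \<in> \<nu> \<longleftrightarrow> a \<in> \<mu>"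
    using assms(1) by (simp add: well_formed_def)
  then have "\<forall>(b, Q, \<mu>) \<in> nodes K. b \<in> \<nu> \<longleftrightarrow> k \<in> \<mu>"
    using assms(2) by fastforce
  then have "k' \<in> \<nu>"
    using k'(1,2) by fastforce
  then show False
    using assms(3) k' by auto
qed

lemma dirac_cong_dirac: "cong M M' \<Longrightarrow> dirac_cong (dirac M) M'"
proof -
  assume "cong M M'"
  moreover have "{N. dirac M N \<noteq> 0} = {M}"
    by (auto simp: dirac_def)
  ultimately show ?thesis
    by (auto simp: dirac_cong_def dirac_def)
qed

locale gossip_round =
  fixes I J I1 I2 I3 :: "nat set"
    and v :: 'v
    and p q :: "nat \<Rightarrow> real"
    and m n :: "nat \<Rightarrow> 'n"
    and nu :: "'n \<Rightarrow> 'n set"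
    and M N :: "('n, 'v) net"
  assumes finite_I: "finite I" and finite_J: "finite J"
    and p_prob: "\<forall>i \<in> I. 0 \<le> p i \<and> p i \<le> 1"
    and well_formed_M: "well_formed M"
    and no_bot_N: "\<not> has_bot N"
    and cong_M: "cong M (Par N (Par (prodnet I (\<lambda>i. Node (m i) (snd_p (DVal v) (p i)) (nu (m i))))
                                   (prodnet J (\<lambda>j. Node (n j) (fwd_p (q j)) (nu (n j))))))"
    and nbhds_in_M: "\<forall>i \<in> I. nu (m i) \<subseteq> nds M"
    and N_deaf: "\<forall>i \<in> I. \<forall>(k, P, \<mu>) \<in> nodes N. k \<in> nu (m i) \<longrightarrow> \<not> rcv k \<mu> P"
    and partition: "I1 \<union> I2 \<union> I3 = I" "I1 \<inter> I2 = {}" "I1 \<inter> I3 = {}" "I2 \<inter> I3 = {}"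
begin

abbreviation sending :: "nat \<Rightarrow> ('n, 'v) net" where
  "sending \<equiv> \<lambda>i. Node (m i) (snd_p (DVal v) (p i)) (nu (m i))"

abbreviation broadcasting :: "nat \<Rightarrow> ('n, 'v) net" where
  "broadcasting \<equiv> \<lambda>i. Node (m i) (bang v) (nu (m i))"

abbreviation idle :: "nat \<Rightarrow> ('n, 'v) net" where
  "idle \<equiv> \<lambda>i. Node (m i) PNil (nu (m i))"

abbreviation resending :: "nat \<Rightarrow> ('n, 'v) net" where
  "resending \<equiv> \<lambda>j. Node (n j) (resnd_p (DVal v) (q j)) (nu (n j))"

abbreviation initial :: "('n, 'v) net" where
  "initial \<equiv> Par N (Par (prodnet I sending) (prodnet J (\<lambda>j. Node (n j) (fwd_p (q j)) (nu (n j)))))"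

abbreviation stage :: "('n, 'v) net" where
  "stage \<equiv> Par N (Par (prodnet I1 broadcasting) (Par (prodnet I2 idle)
             (Par (prodnet I3 sending) (prodnet J resending))))"

abbreviation silenced :: "('n, 'v) net" where
  "silenced \<equiv> Par N (Par (prodnet I idle) (prodnet J resending))"

abbreviation senders :: "'n set" where
  "senders \<equiv> m ` (I1 \<union> I3)"

lemma finite_parts: "finite I1" "finite I2" "finite I3"
  using finite_I partition(1) by (auto intro: finite_subset)

lemma mset_nlist_stage: "mset (nlist initial) = mset (nlist stage)"
proof -
  have "mset_set I = mset_set I1 + mset_set I2 + mset_set I3"
    using finite_parts partition(2-4)
    by (simp add: partition(1)[symmetric] mset_set_Union Int_Un_distrib2)
  then show ?thesis
    by (simp add: mset_sorted_list_of_set)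
qed

lemma well_formed_stage: "well_formed stage"
proof -
  have "nbhds initial = nbhds stage"
    using finite_parts finite_J by (simp add: partition(1)[symmetric] image_Un Un_assoc)
  with well_formed_cong[OF well_formed_M cong_M] show ?thesis
    using mset_nlist_stage by (rule well_formed_transfer)
qed

lemma nds_stage: "nds stage = nds M"
  using mset_eq_setD[OF mset_nlist_stage] mset_eq_setD[OF cong_mset_nlist[OF cong_M]]
  unfolding nds_def by simp

lemma senders_ready:
  "\<forall>k \<in> senders. \<exists>\<nu>. \<nu> \<subseteq> nds stage \<and> ((k, bang v, \<nu>) \<in> nodes stage
     \<or> (\<exists>p. 0 \<le> p \<and> p \<le> 1 \<and> (k, snd_p (DVal v) p, \<nu>) \<in> nodes stage))"
proof
  fix k
  assume "k \<in> senders"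
  then obtain i where i: "i \<in> I1 \<union> I3" "k = m i"
    by blast
  then have "nu (m i) \<subseteq> nds stage"
    using nbhds_in_M partition(1) nds_stage by blast
  moreover have "0 \<le> p i" "p i \<le> 1"
    using p_prob partition(1) i(1) by auto
  moreover have "(m i, bang v, nu (m i)) \<in> nodes stage
      \<or> (m i, snd_p (DVal v) (p i), nu (m i)) \<in> nodes stage"
    using i(1) finite_parts by auto
  ultimately show "\<exists>\<nu>. \<nu> \<subseteq> nds stage \<and> ((k, bang v, \<nu>) \<in> nodes stage
     \<or> (\<exists>p. 0 \<le> p \<and> p \<le> 1 \<and> (k, snd_p (DVal v) p, \<nu>) \<in> nodes stage))"
    using i(2) by blast
qed

lemma senders_unheard: "\<forall>k \<in> senders. unheard stage k"
proof
  fix k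
  assume "k \<in> senders"
  then obtain i where i: "i \<in> I1 \<union> I3" "k = m i"
    by blast
  then obtain P where node: "(k, P, nu (m i)) \<in> nodes stage"
    using finite_parts by auto
  have "\<not> rcv k' \<mu> Q" if "(k', Q, \<mu>) \<in> nodes stage" "k' \<in> nu (m i)" for k' Q \<mu>
  proof (cases "(k', Q, \<mu>) \<in> nodes N")
    case True
    then show ?thesis
      using N_deaf partition(1) i(1) that(2) by blast
  next
    case False
    then have "top_prefix Q \<noteq> PrefRcv"
      using that(1) finite_parts finite_J by (auto simp: bang_def snd_p_def resnd_p_def)
    then show ?thesis
      by (rule not_rcv)
  qed
  then show "unheard stage k"
    using well_formed_stage node by (blast intro: unheard_if_neighbours_quiet)
qed

lemma weak_tau_stage: "weak_tau stage (dirac (override stage (nil_on senders)))"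
  using well_formed_stage no_bot_N finite_parts senders_ready senders_unheard
  by (intro weak_tau_silence_senders) auto

lemma cong_silenced_stage: "cong (override stage (nil_on senders)) silenced"
proof -
  have "\<forall>k \<in> nds N. k \<notin> senders" "\<forall>j \<in> J. n j \<notin> senders"
    using well_formed_stage finite_parts finite_J by (auto simp: well_formed_def nds_def)
  then have "override N (nil_on senders) = N" "\<forall>j \<in> J. n j \<notin> senders"
    by (simp_all add: nil_on_def override_id)
  then have "override stage (nil_on senders)
      = Par N (Par (prodnet I1 idle) (Par (prodnet I2 idle) (Par (prodnet I3 idle) (prodnet J resending))))"
    by (simp cong: prodnet_cong)
  moreover have "cong (Par (prodnet I1 idle) (Par (prodnet I2 idle) (Par (prodnet I3 idle) (prodnet J resending))))
      (Par (prodnet I idle) (prodnet J resending))"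
    using cong_prodnet_union3[OF finite_parts partition(2-4)] by (simp add: partition(1))
  ultimately show ?thesis
    by (simp add: cong_parR)
qed

end

theorem lemmaA4:
  fixes I J I1 I2 I3 :: "nat set"
    and v :: 'v
    and p q :: "nat \<Rightarrow> real"
    and m n :: "nat \<Rightarrow> 'n"
    and nu :: "'n \<Rightarrow> 'n set"
    and M N :: "('n, 'v) net"
  assumes "finite I" and "finite J" and "I \<inter> J = {}"
    and "\<forall>i\<in>I. 0 \<le> p i \<and> p i \<le> 1"
    and "\<forall>j\<in>J. 0 \<le> q j \<and> q j \<le> 1"
    and "well_formed M"
    and "\<not> has_bot N"
    and "cong M (Par N (Par (prodnet I (\<lambda>i. Node (m i) (snd_p (DVal v) (p i)) (nu (m i))))
                          (prodnet J (\<lambda>j. Node (n j) (fwd_p (q j)) (nu (n j))))))"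
    and "\<forall>i\<in>I. n ` J \<subseteq> nu (m i) \<and> nu (m i) \<subseteq> nds M"
    and "\<forall>i\<in>I. \<forall>(k, P, \<mu>) \<in> nodes N. k \<in> nu (m i) \<longrightarrow> \<not> rcv k \<mu> P"
    and "I1 \<union> I2 \<union> I3 = I" and "I1 \<inter> I2 = {}" and "I1 \<inter> I3 = {}" and "I2 \<inter> I3 = {}"
  shows "\<exists>E. weak_tau
            (Par N (Par (prodnet I1 (\<lambda>i. Node (m i) (bang v) (nu (m i))))
                   (Par (prodnet I2 (\<lambda>i. Node (m i) PNil (nu (m i))))
                   (Par (prodnet I3 (\<lambda>i. Node (m i) (snd_p (DVal v) (p i)) (nu (m i))))
                        (prodnet J (\<lambda>j. Node (n j) (resnd_p (DVal v) (q j)) (nu (n j))))))))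
            E
          \<and> dirac_cong E
            (Par N (Par (prodnet I (\<lambda>i. Node (m i) PNil (nu (m i))))
                        (prodnet J (\<lambda>j. Node (n j) (resnd_p (DVal v) (q j)) (nu (n j))))))"
proof -
  interpret gossip_round I J I1 I2 I3 v p q m n nu M N
    using assms by unfold_locales auto
  show ?thesis
    using weak_tau_stage dirac_cong_dirac[OF cong_silenced_stage] by blast
qed

end
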